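(* Consider the single-element, single-slab space-time SBP scheme with weakly imposed homogeneous Dirichlet boundary conditions: unknowns $\boldsymbol\rho,\boldsymbol g_1,\dots,\boldsymbol g_{n_v}$ satisfying $$\mathsf D_t\boldsymbol\rho+\mathsf D_x\langle v\boldsymbol g\rangle=-\sigma_a\boldsymbol\rho+\mathsf{SAT}^{\rho}_L+\mathsf{SAT}^{\rho}_R-\mathsf H_t^{-1}\mathsf t_B\mathsf t_B^\top(\boldsymbol\rho-\boldsymbol\rho(0)),$$ $$\mathsf D_t\boldsymbol g_k+\tfrac{v_k}{\varepsilon}\mathsf D_x\boldsymbol g_k-\tfrac1\varepsilon\langle v\mathsf D_x\boldsymbol g\rangle+\tfrac{v_k}{\varepsilon^2}\mathsf D_x\boldsymbol\rho=-\Big(\tfrac{\sigma_s}{\varepsilon^2}+\sigma_a\Big)\boldsymbol g_k+\mathsf{SAT}^{g_k}_{LR}-\langle\mathsf{SAT}^{g}_{LR}\rangle-\mathsf H_t^{-1}\mathsf t_B\mathsf t_B^\top(\boldsymbol g_k-\boldsymbol g_k(0)),$$ $k=1,\dots,n_v$, where $\mathsf{SAT}^\rho_L=-\tau_\rho\mathsf H_x^{-1}\mathsf t_L\mathsf t_L^\top\langle v^+(\boldsymbol\rho+\varepsilon\boldsymbol g)\rangle$, $\mathsf{SAT}^\rho_R=\tau_\rho\mathsf H_x^{-1}\mathsf t_R\mathsf t_R^\top\langle v^-(\boldsymbol\rho+\varepsilon\boldsymbol g)\rangle$, and $\mathsf{SAT}^{g_k}_{LR}=-\tau_g v_k\mathsf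 H_x^{-1}\mathsf t_L\mathsf t_L^\top(\boldsymbol\rho+\varepsilon\boldsymbol g_k)$ if $v_k>0$, $\mathsf{SAT}^{g_k}_{LR}=\tau_g v_k\mathsf H_x^{-1}\mathsf t_R\mathsf t_R^\top(\boldsymbol\rho+\varepsilon\boldsymbol g_k)$ if $v_k<0$ (and $0$ if $v_k=0$), with initial data satisfying $\langle\boldsymbol g(0)\rangle=0$. If $\tau_\rho=\frac1{2\varepsilon}$, $\tau_g=\frac1{2\varepsilon^2}$ and the velocity quadrature is symmetric, then the scheme is stable: every solution satisfies $$\tfrac12\boldsymbol\rho^\top(\bar{\boldsymbol t}_T\bar{\boldsymbol t}_T^\top\otimes\bar{\mathsf H}_x)\boldsymbol\rho+\tfrac{\varepsilon^2}2\langle\boldsymbol g^\top(\bar{\boldsymbol t}_T\bar{\boldsymbol t}_T^\top\otimes\bar{\mathsf H}_x)\boldsymbol g\rangle\le\tfrac12\boldsymbol\rho(0)^\top(\bar{\boldsymbol t}_B\bar{\boldsymbol t}_B^\top\otimes\bar{\mathsf H}_x)\boldsymbol\rho(0)+\tfrac{\varepsilon^2}2\langle\boldsymbol g(0)^\top(\bar{\boldsymbol t}_B\bar{\boldsymbol t}_B^\top\otimes\bar{\mathsf H}_x)\boldsymbol g(0)\rangle.$$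
   Context: SBP operators: $\bar{\mathsf D}=\bar{\mathsf H}^{-1}\bar{\mathsf Q}$ on nodes $x_0<\dots<x_n$ is a degree-$p$ SBP approximation of $d/dx$ if $\bar{\mathsf D}\boldsymbol x^k=k\boldsymbol x^{k-1}$ for $0\le k\le p$, $\bar{\mathsf H}$ is diagonal symmetric positive definite, and $\bar{\mathsf Q}+\bar{\mathsf Q}^\top=\bar{\boldsymbol t}_R\bar{\boldsymbol t}_R^\top-\bar{\boldsymbol t}_L\bar{\boldsymbol t}_L^\top=\mathrm{diag}(-1,0,\dots,0,1)$, with $\bar{\boldsymbol t}_L,\bar{\boldsymbol t}_R$ the first/last unit vectors. $\bar{\mathsf D}_x=\bar{\mathsf H}_x^{-1}\bar{\mathsf Q}_x$ on $n_x+1$ spatial nodes; $\bar{\mathsf D}_t=\bar{\mathsf H}_t^{-1}\bar{\mathsf Q}_t$ on $n_t+1$ temporal nodes with first/last unit vectors $\bar{\boldsymbol t}_B,\bar{\boldsymbol t}_T$. With identities $\mathsf I_{n_x},\mathsf I_{n_t}$ of sizes $n_x+1,n_t+1$: $\mathsf D_t=\bar{\mathsf D}_t\otimes\mathsf I_{n_x}$, $\mathsf D_x=\mathsf I_{n_t}\otimes\bar{\mathsf D}_x$, $\mathsf H_t=\bar{\mathsf H}_t\otimes\mathsf I_{n_x}$, $\mathsf H_x=\mathsf I_{n_t}\otimes\bar{\mathsf H}_x$, $\mathsf t_{R/L}=\mathsf I_{n_t}\otimes\bar{\boldsymbol t}_{R/L}$, $\mathsf t_B=\bar{\boldsymbol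 t}_B\otimes\mathsf I_{n_x}$. Velocity nodes $v_k$, weights $\omega_k>0$, $k=1,\dots,n_v$, with $\sum\omega_k=1$, $\sum\omega_kv_k=0$; $v^+=\max(v,0)$, $v^-=\min(v,0)$; $\langle\boldsymbol a\rangle=\sum_k\omega_k\boldsymbol a_k$, e.g. $\langle v^+(\boldsymbol\rho+\varepsilon\boldsymbol g)\rangle=\sum_k\omega_kv_k^+(\boldsymbol\rho+\varepsilon\boldsymbol g_k)$. The quadrature is symmetric if $\omega_k=\omega_{k'}$ and $v_k=-v_{k'}$ whenever $k+k'=n_v+1$. Parameters $\varepsilon>0$, $\sigma_s>0$, $\sigma_a\ge0$; $\boldsymbol\rho(0),\boldsymbol g_k(0)$ given initial-data vectors. *)

theory Defs
  imports Main "HOL.Real"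
begin

text \<open>Space-time vectors (Kronecker ordering: time index
  outer, space index inner) are functions u i j with 0 <= i <= n_t (time) and
  0 <= j <= n_x (space).  Velocity-indexed families are functions of k, 1 <= k <= n_v.\<close>

definition diag_pd :: "nat \<Rightarrow> (nat \<Rightarrow> nat \<Rightarrow> real) \<Rightarrow> bool" where
  "diag_pd n H \<longleftrightarrow> (\<forall>i\<le>n. \<forall>j\<le>n. i \<noteq> j \<longrightarrow> H i j = 0) \<and> (\<forall>i\<le>n. H i i > 0)"

definition sbp_D :: "(nat \<Rightarrow> nat \<Rightarrow> real) \<Rightarrow> (nat \<Rightarrow> nat \<Rightarrow> real) \<Rightarrow> nat \<Rightarrow> nat \<Rightarrow> real" where
  "sbp_D H Q i j = Q i j / H i i"

definition is_sbp :: "nat \<Rightarrow> (nat \<Rightarrow> real) \<Rightarrow> (nat \<Rightarrow> nat \<Rightarrow> real) \<Rightarrow> (nat \<Rightarrow> nat \<Rightarrow> real) \<Rightarrow> nat \<Rightarrow> bool" where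
  "is_sbp n x H Q p \<longleftrightarrow>
     1 \<le> n \<and> (\<forall>i<n. x i < x (Suc i)) \<and> diag_pd n H \<and>
     (\<forall>i\<le>n. \<forall>j\<le>n. Q i j + Q j i =
         (if i = j \<and> i = n then 1 else 0) - (if i = j \<and> i = 0 then 1 else 0)) \<and>
     (\<forall>k\<le>p. \<forall>i\<le>n. (\<Sum>j\<le>n. sbp_D H Q i j * x j ^ k) = real k * x i ^ (k - 1))"

definition vel_quad :: "nat \<Rightarrow> (nat \<Rightarrow> real) \<Rightarrow> (nat \<Rightarrow> real) \<Rightarrow> bool" where
  "vel_quad nv \<omega> v \<longleftrightarrow> 1 \<le> nv \<and> (\<forall>k\<in>{1..nv}. \<omega> k > 0) \<and>
     (\<Sum>k=1..nv. \<omega> k) = 1 \<and> (\<Sum>k=1..nv. \<omega> k * v k) = 0"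

definition sym_quad :: "nat \<Rightarrow> (nat \<Rightarrow> real) \<Rightarrow> (nat \<Rightarrow> real) \<Rightarrow> bool" where
  "sym_quad nv \<omega> v \<longleftrightarrow> (\<forall>k\<in>{1..nv}. \<forall>k'\<in>{1..nv}. k + k' = nv + 1 \<longrightarrow>
     \<omega> k = \<omega> k' \<and> v k = - v k')"

definition vpos :: "real \<Rightarrow> real" where "vpos a = max a 0"
definition vneg :: "real \<Rightarrow> real" where "vneg a = min a 0"

definition vavg :: "nat \<Rightarrow> (nat \<Rightarrow> real) \<Rightarrow> (nat \<Rightarrow> real) \<Rightarrow> real" where
  "vavg nv \<omega> a = (\<Sum>k=1..nv. \<omega> k * a k)"

text \<open>(D_t u)(i,j) with D_t = Dbar_t (x) I and (D_x u)(i,j) with D_x = I (x) Dbar_x.\<close>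
definition Dt_app :: "nat \<Rightarrow> (nat \<Rightarrow> nat \<Rightarrow> real) \<Rightarrow> (nat \<Rightarrow> nat \<Rightarrow> real) \<Rightarrow> (nat \<Rightarrow> nat \<Rightarrow> real) \<Rightarrow> nat \<Rightarrow> nat \<Rightarrow> real" where
  "Dt_app nt Ht Qt u i j = (\<Sum>i'\<le>nt. sbp_D Ht Qt i i' * u i' j)"

definition Dx_app :: "nat \<Rightarrow> (nat \<Rightarrow> nat \<Rightarrow> real) \<Rightarrow> (nat \<Rightarrow> nat \<Rightarrow> real) \<Rightarrow> (nat \<Rightarrow> nat \<Rightarrow> real) \<Rightarrow> nat \<Rightarrow> nat \<Rightarrow> real" where
  "Dx_app nx Hx Qx u i j = (\<Sum>j'\<le>nx. sbp_D Hx Qx j j' * u i j')"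

text \<open>(H_x^{-1} t_L t_L^T w)(i,j) and (H_x^{-1} t_R t_R^T w)(i,j).\<close>
definition liftL :: "(nat \<Rightarrow> nat \<Rightarrow> real) \<Rightarrow> (nat \<Rightarrow> nat \<Rightarrow> real) \<Rightarrow> nat \<Rightarrow> nat \<Rightarrow> real" where
  "liftL Hx w i j = (if j = 0 then w i 0 / Hx 0 0 else 0)"

definition liftR :: "nat \<Rightarrow> (nat \<Rightarrow> nat \<Rightarrow> real) \<Rightarrow> (nat \<Rightarrow> nat \<Rightarrow> real) \<Rightarrow> nat \<Rightarrow> nat \<Rightarrow> real" where
  "liftR nx Hx w i j = (if j = nx then w i nx / Hx nx nx else 0)"

text \<open>(H_t^{-1} t_B t_B^T w)(i,j).\<close>
definition liftB :: "(nat \<Rightarrow> nat \<Rightarrow> real) \<Rightarrow> (nat \<Rightarrow> nat \<Rightarrow> real) \<Rightarrow> nat \<Rightarrow> nat \<Rightarrow> real" where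
  "liftB Ht w i j = (if i = 0 then w 0 j / Ht 0 0 else 0)"

definition satg :: "nat \<Rightarrow> (nat \<Rightarrow> nat \<Rightarrow> real) \<Rightarrow> real \<Rightarrow> real \<Rightarrow> real \<Rightarrow>
    (nat \<Rightarrow> nat \<Rightarrow> real) \<Rightarrow> (nat \<Rightarrow> nat \<Rightarrow> real) \<Rightarrow> nat \<Rightarrow> nat \<Rightarrow> real" where
  "satg nx Hx \<tau>g \<epsilon> v \<rho> gk i j =
     (if v > 0 then - \<tau>g * v * liftL Hx (\<lambda>i' j'. \<rho> i' j' + \<epsilon> * gk i' j') i j
      else if v < 0 then \<tau>g * v * liftR nx Hx (\<lambda>i' j'. \<rho> i' j' + \<epsilon> * gk i' j') i j
      else 0)"

text \<open>u^T (e_m e_m^T (x) Hbar_x) u, for time index m.\<close>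
definition slab_energy :: "nat \<Rightarrow> (nat \<Rightarrow> nat \<Rightarrow> real) \<Rightarrow> nat \<Rightarrow> (nat \<Rightarrow> nat \<Rightarrow> real) \<Rightarrow> real" where
  "slab_energy nx Hx m u = (\<Sum>j\<le>nx. \<Sum>j'\<le>nx. u m j * Hx j j' * u m j')"

end

theory Submission
  imports Defs
begin

(* Test the rho-equation with rho and the g_k-equation with eps^2 omega_k g_k in the inner product
   of Ht (x) Hx.  In time, summation by parts and the weak initial condition turn the D_t-terms
   into 1/2 |u(T)|^2 - 1/2 |u(0)|^2 + 1/2 |u(0) - u0|^2, so it suffices that the spatial terms are
   nonpositive at every time level.  Averaging the g-equations over the velocities removes all
   transport and SAT terms (sum omega = 1, sum omega v = 0) and leaves a damped ODE with zero
   initial data for <g>; hence <g> = 0, and the k-independent terms of the g-equations do not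
   contribute.  Summation by parts in space reduces the remaining coupling terms to boundary
   values.  With tau_rho = 1/(2 eps) and tau_g = 1/(2 eps^2), the boundary terms of velocity v_k
   combine, in the characteristic variable w = rho + eps g_k, into
   (v_k^- w_L^2 - v_k^+ w_R^2) / (2 eps) <= 0 plus v_k (rho_R^2 - rho_L^2) / (2 eps), and the
   latter vanishes in the velocity average. *)

section \<open>Diagonal-norm inner products and summation by parts\<close>

definition h_inner :: "nat \<Rightarrow> (nat \<Rightarrow> nat \<Rightarrow> real) \<Rightarrow> (nat \<Rightarrow> real) \<Rightarrow> (nat \<Rightarrow> real) \<Rightarrow> real" where
  "h_inner n H a b = (\<Sum>j\<le>n. H j j * a j * b j)"

lemma h_inner_add [simp]: "h_inner n H a (\<lambda>j. b j + c j) = h_inner n H a b + h_inner n H a c"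
  by (simp add: h_inner_def algebra_simps sum.distrib)

lemma h_inner_diff [simp]: "h_inner n H a (\<lambda>j. b j - c j) = h_inner n H a b - h_inner n H a c"
  by (simp add: h_inner_def algebra_simps sum_subtractf)

lemma h_inner_minus [simp]: "h_inner n H a (\<lambda>j. - b j) = - h_inner n H a b"
  by (simp add: h_inner_def sum_negf)

lemma h_inner_scale [simp]: "h_inner n H a (\<lambda>j. c * b j) = c * h_inner n H a b"
  by (simp add: h_inner_def sum_distrib_left mult_ac)

lemma h_inner_cong: "(\<And>j. j \<le> n \<Longrightarrow> b j = c j) \<Longrightarrow> h_inner n H a b = h_inner n H a c"
  by (simp add: h_inner_def)

lemma h_inner_commute: "h_inner n H a b = h_inner n H b a"
  by (simp add: h_inner_def mult_ac)

lemma h_inner_self_nonneg: "\<forall>j\<le>n. H j j \<ge> 0 \<Longrightarrow> h_inner n H a a \<ge> 0"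
  unfolding h_inner_def
  by (auto simp: mult.assoc intro!: sum_nonneg mult_nonneg_nonneg[OF _ zero_le_square])

lemma h_inner_self_eq_0:
  assumes "\<forall>j\<le>n. H j j > 0" "h_inner n H a a = 0" "j \<le> n"
  shows "a j = 0"
proof -
  have "H j j * a j * a j = 0"
    using assms by (subst (asm) h_inner_def, subst (asm) sum_nonneg_eq_0_iff)
      (auto simp: mult.assoc intro!: mult_nonneg_nonneg[OF _ zero_le_square])
  then show ?thesis
    using assms by (metis less_irrefl mult_eq_0_iff)
qed

lemma slab_energy_eq_h_inner:
  assumes "diag_pd n H"
  shows "slab_energy n H m u = h_inner n H (u m) (u m)"
  unfolding slab_energy_def h_inner_def
proof (intro sum.cong refl)
  fix j assume "j \<in> {..n}"
  then have "(\<Sum>j'\<le>n. u m j * H j j' * u m j') = (\<Sum>j'\<le>n. if j' = j then u m j * H j j * u m j else 0)"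
    using assms unfolding diag_pd_def by (intro sum.cong refl) auto
  then show "(\<Sum>j'\<le>n. u m j * H j j' * u m j') = H j j * u m j * u m j"
    using \<open>j \<in> {..n}\<close> by simp
qed

definition sbp_boundary :: "nat \<Rightarrow> (nat \<Rightarrow> nat \<Rightarrow> real) \<Rightarrow> bool" where
  "sbp_boundary n Q \<longleftrightarrow> (\<forall>i\<le>n. \<forall>j\<le>n. Q i j + Q j i =
     (if i = j \<and> i = n then 1 else 0) - (if i = j \<and> i = 0 then 1 else 0))"

lemma is_sbpD:
  assumes "is_sbp n x H Q p"
  shows "\<forall>i\<le>n. H i i > 0" "diag_pd n H" "sbp_boundary n Q"
  using assms unfolding is_sbp_def diag_pd_def sbp_boundary_def by auto

definition sbp_apply :: "nat \<Rightarrow> (nat \<Rightarrow> nat \<Rightarrow> real) \<Rightarrow> (nat \<Rightarrow> nat \<Rightarrow> real) \<Rightarrow> (nat \<Rightarrow> real) \<Rightarrow> nat \<Rightarrow> real"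
  where "sbp_apply n H Q b i = (\<Sum>j\<le>n. sbp_D H Q i j * b j)"

lemma h_inner_sbp_apply:
  assumes "\<forall>i\<le>n. H i i \<noteq> 0"
  shows "h_inner n H a (sbp_apply n H Q b) = (\<Sum>i\<le>n. \<Sum>j\<le>n. a i * Q i j * b j)"
  unfolding h_inner_def sbp_apply_def sbp_D_def
  using assms by (intro sum.cong refl) (auto simp: sum_distrib_left field_simps intro!: sum.cong)

lemma summation_by_parts:
  assumes "sbp_boundary n Q" "\<forall>i\<le>n. H i i \<noteq> 0"
  shows "h_inner n H a (sbp_apply n H Q b) + h_inner n H b (sbp_apply n H Q a) = a n * b n - a 0 * b 0"
proof -
  have "h_inner n H a (sbp_apply n H Q b) + h_inner n H b (sbp_apply n H Q a)
      = (\<Sum>i\<le>n. \<Sum>j\<le>n. a i * (Q i j + Q j i) * b j)"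
    unfolding h_inner_sbp_apply[of n H, OF assms(2)]
    by (subst (2) sum.swap) (simp add: sum.distrib[symmetric] algebra_simps)
  also have "\<dots> = (\<Sum>i\<le>n. \<Sum>j\<le>n.
      if j = i then (if i = n then a i * b i else 0) - (if i = 0 then a i * b i else 0) else 0)"
    using assms(1) unfolding sbp_boundary_def by (intro sum.cong refl) auto
  also have "\<dots> = a n * b n - a 0 * b 0"
    by (simp add: sum_subtractf)
  finally show ?thesis .
qed

lemma summation_by_parts_square:
  assumes "sbp_boundary n Q" "\<forall>i\<le>n. H i i \<noteq> 0"
  shows "h_inner n H a (sbp_apply n H Q a) = ((a n)^2 - (a 0)^2) / 2"
  using summation_by_parts[of n Q H a a, OF assms] by (simp add: power2_eq_square)

lemma Dt_app_eq_sbp_apply: "(\<lambda>i. Dt_app nt Ht Qt u i j) = sbp_apply nt Ht Qt (\<lambda>i. u i j)"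
  by (simp add: Dt_app_def sbp_apply_def fun_eq_iff)

lemma Dx_app_eq_sbp_apply: "Dx_app nx Hx Qx u i = sbp_apply nx Hx Qx (u i)"
  by (simp add: Dx_app_def sbp_apply_def fun_eq_iff)

lemma Dx_app_scale: "Dx_app nx Hx Qx (\<lambda>i j. c * u i j) i j = c * Dx_app nx Hx Qx u i j"
  by (simp add: Dx_app_def sum_distrib_left mult_ac)

lemma h_inner_liftL: "H 0 0 \<noteq> 0 \<Longrightarrow> h_inner n H a (liftL H w i) = a 0 * w i 0"
  by (simp add: h_inner_def liftL_def if_distrib cong: if_cong)

lemma h_inner_liftR: "H n n \<noteq> 0 \<Longrightarrow> h_inner n H a (liftR n H w i) = a n * w i n"
  by (simp add: h_inner_def liftR_def if_distrib cong: if_cong)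

lemma h_inner_liftB: "H 0 0 \<noteq> 0 \<Longrightarrow> h_inner n H a (\<lambda>i. liftB H w i j) = a 0 * w 0 j"
  by (simp add: h_inner_def liftB_def if_distrib cong: if_cong)

lemma h_inner_satg:
  assumes "H 0 0 \<noteq> 0" "H n n \<noteq> 0"
  shows "h_inner n H a (satg n H \<tau> \<epsilon> v \<rho> gk i)
    = \<tau> * (vneg v * a n * (\<rho> i n + \<epsilon> * gk i n) - vpos v * a 0 * (\<rho> i 0 + \<epsilon> * gk i 0))"
proof -
  have "satg n H \<tau> \<epsilon> v \<rho> gk i
    = (\<lambda>j. (- \<tau> * vpos v) * liftL H (\<lambda>i' j'. \<rho> i' j' + \<epsilon> * gk i' j') i j
         + (\<tau> * vneg v) * liftR n H (\<lambda>i' j'. \<rho> i' j' + \<epsilon> * gk i' j') i j)"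
    by (auto simp: fun_eq_iff satg_def vpos_def vneg_def)
  then show ?thesis
    using assms by (simp add: h_inner_liftL h_inner_liftR algebra_simps)
qed

section \<open>Velocity averages\<close>

lemma vavg_add [simp]: "vavg n \<omega> (\<lambda>k. a k + b k) = vavg n \<omega> a + vavg n \<omega> b"
  by (simp add: vavg_def algebra_simps sum.distrib)

lemma vavg_diff [simp]: "vavg n \<omega> (\<lambda>k. a k - b k) = vavg n \<omega> a - vavg n \<omega> b"
  by (simp add: vavg_def algebra_simps sum_subtractf)

lemma vavg_scale [simp]: "vavg n \<omega> (\<lambda>k. c * a k) = c * vavg n \<omega> a"
  by (simp add: vavg_def sum_distrib_left mult_ac)

lemma vavg_divide [simp]: "vavg n \<omega> (\<lambda>k. a k / c) = vavg n \<omega> a / c"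
  by (simp add: vavg_def sum_divide_distrib)

lemma vavg_zero [simp]: "vavg n \<omega> (\<lambda>k. 0) = 0"
  by (simp add: vavg_def)

lemma vavg_cong: "(\<And>k. k \<in> {1..n} \<Longrightarrow> a k = b k) \<Longrightarrow> vavg n \<omega> a = vavg n \<omega> b"
  by (simp add: vavg_def)

lemma vavg_const: "vel_quad n \<omega> v \<Longrightarrow> vavg n \<omega> (\<lambda>k. c) = c"
  by (simp add: vavg_def vel_quad_def flip: sum_distrib_right)

lemma vavg_velocity: "vel_quad n \<omega> v \<Longrightarrow> vavg n \<omega> (\<lambda>k. v k * c) = 0"
  by (simp add: vavg_def vel_quad_def flip: mult.assoc sum_distrib_right)

lemma vavg_mono:
  assumes "vel_quad n \<omega> v" "\<And>k. k \<in> {1..n} \<Longrightarrow> a k \<le> b k"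
  shows "vavg n \<omega> a \<le> vavg n \<omega> b"
  using assms unfolding vavg_def vel_quad_def
  by (intro sum_mono mult_left_mono) (auto intro: less_imp_le)

lemma h_inner_vavg:
  "h_inner n H a (\<lambda>j. vavg m \<omega> (\<lambda>k. b k j)) = vavg m \<omega> (\<lambda>k. h_inner n H a (b k))"
  unfolding h_inner_def vavg_def sum_distrib_left
  by (subst sum.swap) (simp add: mult_ac)

lemma vavg_h_inner_eq_0:
  assumes "\<forall>j\<le>n. vavg m \<omega> (\<lambda>k. a k j) = 0"
  shows "vavg m \<omega> (\<lambda>k. h_inner n H (a k) b) = 0"
proof -
  have "vavg m \<omega> (\<lambda>k. h_inner n H (a k) b) = h_inner n H b (\<lambda>j. vavg m \<omega> (\<lambda>k. a k j))"
    by (simp add: h_inner_vavg h_inner_commute)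
  also have "\<dots> = 0"
    using assms by (simp add: h_inner_def)
  finally show ?thesis .
qed

lemma Dx_app_vavg:
  "Dx_app nx Hx Qx (\<lambda>i j. vavg n \<omega> (\<lambda>k. u k i j)) i j = vavg n \<omega> (\<lambda>k. Dx_app nx Hx Qx (u k) i j)"
  unfolding Dx_app_def vavg_def sum_distrib_left
  by (subst sum.swap) (simp add: mult_ac)

section \<open>Time derivative with weakly imposed initial data\<close>

definition Dt_sat :: "nat \<Rightarrow> (nat \<Rightarrow> nat \<Rightarrow> real) \<Rightarrow> (nat \<Rightarrow> nat \<Rightarrow> real)
    \<Rightarrow> (nat \<Rightarrow> nat \<Rightarrow> real) \<Rightarrow> (nat \<Rightarrow> nat \<Rightarrow> real) \<Rightarrow> nat \<Rightarrow> nat \<Rightarrow> real" where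
  "Dt_sat nt Ht Qt u u0 i j = Dt_app nt Ht Qt u i j + liftB Ht (\<lambda>i' j'. u i' j' - u0 i' j') i j"

lemma vavg_Dt_sat:
  "vavg n \<omega> (\<lambda>k. Dt_sat nt Ht Qt (u k) (u0 k) i j)
    = Dt_sat nt Ht Qt (\<lambda>i j. vavg n \<omega> (\<lambda>k. u k i j)) (\<lambda>i j. vavg n \<omega> (\<lambda>k. u0 k i j)) i j"
proof -
  have "vavg n \<omega> (\<lambda>k. Dt_app nt Ht Qt (u k) i j) = Dt_app nt Ht Qt (\<lambda>i j. vavg n \<omega> (\<lambda>k. u k i j)) i j"
    unfolding Dt_app_def vavg_def sum_distrib_left
    by (subst sum.swap) (simp add: mult_ac)
  moreover have "vavg n \<omega> (\<lambda>k. liftB Ht (\<lambda>i' j'. u k i' j' - u0 k i' j') i j)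
      = liftB Ht (\<lambda>i' j'. vavg n \<omega> (\<lambda>k. u k i' j') - vavg n \<omega> (\<lambda>k. u0 k i' j')) i j"
    by (simp add: liftB_def vavg_def right_diff_distrib sum_subtractf flip: sum_divide_distrib)
  ultimately show ?thesis
    by (simp add: Dt_sat_def)
qed

lemma h_inner_Dt_sat:
  assumes "is_sbp nt ts Ht Qt pt"
  shows "h_inner nt Ht (\<lambda>i. u i j) (\<lambda>i. Dt_sat nt Ht Qt u u0 i j)
    = ((u nt j)^2 - (u 0 j)^2) / 2 + u 0 j * (u 0 j - u0 0 j)"
proof -
  have H: "\<forall>i\<le>nt. Ht i i \<noteq> 0" and Q: "sbp_boundary nt Qt"
    using is_sbpD[OF assms] by auto
  then show ?thesis
    unfolding Dt_sat_def h_inner_add Dt_app_eq_sbp_apply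
    by (simp add: summation_by_parts_square[of nt Qt Ht, OF Q H] h_inner_liftB)
qed

lemma Dt_sat_energy_ge:
  assumes "is_sbp nt ts Ht Qt pt" "\<forall>j\<le>nx. Hx j j \<ge> 0"
  shows "(\<Sum>i\<le>nt. Ht i i * h_inner nx Hx (u i) (Dt_sat nt Ht Qt u u0 i))
    \<ge> (h_inner nx Hx (u nt) (u nt) - h_inner nx Hx (u0 0) (u0 0)) / 2"
proof -
  have "(h_inner nx Hx (u nt) (u nt) - h_inner nx Hx (u0 0) (u0 0)) / 2
      = (\<Sum>j\<le>nx. Hx j j * (((u nt j)^2 - (u0 0 j)^2) / 2))"
    unfolding h_inner_def diff_divide_distrib sum_divide_distrib sum_subtractf[symmetric]
    by (simp add: power2_eq_square algebra_simps)
  also have "\<dots> \<le> (\<Sum>j\<le>nx. Hx j j * (((u nt j)^2 - (u 0 j)^2) / 2 + u 0 j * (u 0 j - u0 0 j)))"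
  proof (intro sum_mono mult_left_mono)
    fix j
    have "((u nt j)^2 - (u 0 j)^2) / 2 + u 0 j * (u 0 j - u0 0 j) - ((u nt j)^2 - (u0 0 j)^2) / 2
        = (u 0 j - u0 0 j)^2 / 2"
      by (simp add: power2_eq_square field_simps)
    then show "((u nt j)^2 - (u0 0 j)^2) / 2 \<le> ((u nt j)^2 - (u 0 j)^2) / 2 + u 0 j * (u 0 j - u0 0 j)"
      using zero_le_power2[of "u 0 j - u0 0 j"] by linarith
  qed (use assms(2) in auto)
  also have "\<dots> = (\<Sum>j\<le>nx. Hx j j * h_inner nt Ht (\<lambda>i. u i j) (\<lambda>i. Dt_sat nt Ht Qt u u0 i j))"
    by (simp add: h_inner_Dt_sat[OF assms(1)])
  also have "\<dots> = (\<Sum>i\<le>nt. Ht i i * h_inner nx Hx (u i) (Dt_sat nt Ht Qt u u0 i))"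
    unfolding h_inner_def sum_distrib_left by (subst sum.swap) (simp add: mult_ac)
  finally show ?thesis .
qed

lemma damped_Dt_sat_eq_0:
  assumes sbp: "is_sbp nt ts Ht Qt pt" and "\<sigma> > 0"
    and eq: "\<forall>i\<le>nt. Dt_sat nt Ht Qt c c0 i j + \<sigma> * c i j = 0"
    and "c0 0 j = 0" and "i \<le> nt"
  shows "c i j = 0"
proof -
  have Hpos: "\<forall>i\<le>nt. Ht i i > 0"
    using is_sbpD[OF sbp] by auto
  let ?c = "\<lambda>i. c i j"
  have "0 = h_inner nt Ht ?c (\<lambda>i. Dt_sat nt Ht Qt c c0 i j + \<sigma> * c i j)"
    using eq by (simp add: h_inner_def del: h_inner_add h_inner_scale)
  also have "\<dots> = (c nt j)^2 / 2 + (c 0 j)^2 / 2 + \<sigma> * h_inner nt Ht ?c ?c"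
    using \<open>c0 0 j = 0\<close> by (simp add: h_inner_Dt_sat[OF sbp] field_simps power2_eq_square)
  finally have "\<sigma> * h_inner nt Ht ?c ?c \<le> 0"
    using zero_le_power2[of "c nt j"] zero_le_power2[of "c 0 j"] by linarith
  then have "h_inner nt Ht ?c ?c = 0"
    using \<open>\<sigma> > 0\<close> h_inner_self_nonneg[of nt Ht ?c] Hpos
    by (simp add: mult_le_0_iff order_less_imp_le)
  then show ?thesis
    using h_inner_self_eq_0[of nt Ht, OF Hpos] \<open>i \<le> nt\<close> by blast
qed

lemma upwind_boundary_flux:
  fixes \<epsilon> v aL bL aR bR :: real
  assumes "\<epsilon> \<noteq> 0"
  shows "(vneg v * (aR + \<epsilon> * bR)^2 - vpos v * (aL + \<epsilon> * bL)^2) / (2 * \<epsilon>)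
      - v * (aR * bR - aL * bL) - \<epsilon> * v * (bR^2 - bL^2) / 2
    = (vneg v * (aL + \<epsilon> * bL)^2 - vpos v * (aR + \<epsilon> * bR)^2) / (2 * \<epsilon>)
      + v * (aR^2 - aL^2) / (2 * \<epsilon>)"
proof -
  obtain p q where pq: "vpos v = p" "vneg v = q" and v: "v = p + q"
    by (metis vpos_def vneg_def add.commute add_0 max_def min_def)
  show ?thesis
    unfolding pq unfolding v using assms by (simp add: field_simps power2_eq_square)
qed

locale micro_macro_scheme =
  fixes nx nt nv px pt :: nat
    and xs ts :: "nat \<Rightarrow> real"
    and Hx Qx Ht Qt :: "nat \<Rightarrow> nat \<Rightarrow> real"
    and \<omega> v :: "nat \<Rightarrow> real"
    and \<epsilon> \<sigma>s \<sigma>a \<tau>\<rho> \<tau>g :: real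
    and \<rho> \<rho>0 :: "nat \<Rightarrow> nat \<Rightarrow> real"
    and g g0 :: "nat \<Rightarrow> nat \<Rightarrow> nat \<Rightarrow> real"
  assumes sbp_x: "is_sbp nx xs Hx Qx px"
    and sbp_t: "is_sbp nt ts Ht Qt pt"
    and quad: "vel_quad nv \<omega> v"
    and eps: "\<epsilon> > 0" and sigs: "\<sigma>s > 0" and siga: "\<sigma>a \<ge> 0"
    and tau_rho: "\<tau>\<rho> = 1 / (2 * \<epsilon>)"
    and tau_g: "\<tau>g = 1 / (2 * \<epsilon>^2)"
    and g0_avg: "\<forall>i\<le>nt. \<forall>j\<le>nx. vavg nv \<omega> (\<lambda>k. g0 k i j) = 0"
    and eq_rho: "\<forall>i\<le>nt. \<forall>j\<le>nx.
        Dt_app nt Ht Qt \<rho> i j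
        + Dx_app nx Hx Qx (\<lambda>i' j'. vavg nv \<omega> (\<lambda>k. v k * g k i' j')) i j
        = - \<sigma>a * \<rho> i j
          - \<tau>\<rho> * liftL Hx (\<lambda>i' j'. vavg nv \<omega> (\<lambda>k. vpos (v k) * (\<rho> i' j' + \<epsilon> * g k i' j'))) i j
          + \<tau>\<rho> * liftR nx Hx (\<lambda>i' j'. vavg nv \<omega> (\<lambda>k. vneg (v k) * (\<rho> i' j' + \<epsilon> * g k i' j'))) i j
          - liftB Ht (\<lambda>i' j'. \<rho> i' j' - \<rho>0 i' j') i j"
    and eq_g: "\<forall>k\<in>{1..nv}. \<forall>i\<le>nt. \<forall>j\<le>nx.
        Dt_app nt Ht Qt (g k) i j
        + v k / \<epsilon> * Dx_app nx Hx Qx (g k) i j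
        - 1 / \<epsilon> * vavg nv \<omega> (\<lambda>k'. v k' * Dx_app nx Hx Qx (g k') i j)
        + v k / \<epsilon>^2 * Dx_app nx Hx Qx \<rho> i j
        = - (\<sigma>s / \<epsilon>^2 + \<sigma>a) * g k i j
          + satg nx Hx \<tau>g \<epsilon> (v k) \<rho> (g k) i j
          - vavg nv \<omega> (\<lambda>k'. satg nx Hx \<tau>g \<epsilon> (v k') \<rho> (g k') i j)
          - liftB Ht (\<lambda>i' j'. g k i' j' - g0 k i' j') i j"
begin

abbreviation \<sigma> :: real where "\<sigma> \<equiv> \<sigma>s / \<epsilon>^2 + \<sigma>a"

abbreviation w :: "nat \<Rightarrow> nat \<Rightarrow> nat \<Rightarrow> real" where "w k i j \<equiv> \<rho> i j + \<epsilon> * g k i j"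

abbreviation common_rhs :: "nat \<Rightarrow> nat \<Rightarrow> real" where
  "common_rhs i j \<equiv> 1 / \<epsilon> * vavg nv \<omega> (\<lambda>k'. v k' * Dx_app nx Hx Qx (g k') i j)
                    - vavg nv \<omega> (\<lambda>k'. satg nx Hx \<tau>g \<epsilon> (v k') \<rho> (g k') i j)"

abbreviation energy_rate :: "(nat \<Rightarrow> nat \<Rightarrow> real) \<Rightarrow> (nat \<Rightarrow> nat \<Rightarrow> real) \<Rightarrow> nat \<Rightarrow> real" where
  "energy_rate u u0 i \<equiv> h_inner nx Hx (u i) (Dt_sat nt Ht Qt u u0 i)"

lemma Hx_pos: "\<forall>j\<le>nx. Hx j j > 0"
  using is_sbpD[OF sbp_x] by blast

lemma Hx_nonneg: "\<forall>j\<le>nx. Hx j j \<ge> 0"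
  using Hx_pos by (simp add: less_imp_le)

lemma Hx_nonzero: "\<forall>j\<le>nx. Hx j j \<noteq> 0" "Hx 0 0 \<noteq> 0" "Hx nx nx \<noteq> 0"
  using Hx_pos by auto

lemma Qx_boundary: "sbp_boundary nx Qx"
  using is_sbpD[OF sbp_x] by blast

lemma average_g_equation:
  assumes "i \<le> nt" "j \<le> nx"
  shows "Dt_sat nt Ht Qt (\<lambda>i j. vavg nv \<omega> (\<lambda>k. g k i j)) (\<lambda>i j. vavg nv \<omega> (\<lambda>k. g0 k i j)) i j
      + \<sigma> * vavg nv \<omega> (\<lambda>k. g k i j) = 0"
proof -
  let ?X = "\<lambda>k. Dx_app nx Hx Qx (g k) i j"
  let ?S = "\<lambda>k. satg nx Hx \<tau>g \<epsilon> (v k) \<rho> (g k) i j"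
  have "Dt_sat nt Ht Qt (g k) (g0 k) i j + \<sigma> * g k i j
      = (?S k - vavg nv \<omega> ?S) - (v k * ?X k - vavg nv \<omega> (\<lambda>k'. v k' * ?X k')) / \<epsilon>
        - v k * (Dx_app nx Hx Qx \<rho> i j / \<epsilon>^2)"
    if "k \<in> {1..nv}" for k
    using eq_g[rule_format, OF that assms] unfolding Dt_sat_def diff_divide_distrib by argo
  then have "vavg nv \<omega> (\<lambda>k. Dt_sat nt Ht Qt (g k) (g0 k) i j + \<sigma> * g k i j)
      = vavg nv \<omega> (\<lambda>k. (?S k - vavg nv \<omega> ?S) - (v k * ?X k - vavg nv \<omega> (\<lambda>k'. v k' * ?X k')) / \<epsilon>
          - v k * (Dx_app nx Hx Qx \<rho> i j / \<epsilon>^2))"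
    by (rule vavg_cong)
  also have "\<dots> = 0"
    by (simp only: vavg_diff vavg_divide vavg_const[OF quad] vavg_velocity[OF quad]) simp
  finally show ?thesis
    by (simp add: vavg_Dt_sat)
qed

lemma average_g_eq_0:
  assumes "i \<le> nt" "j \<le> nx"
  shows "vavg nv \<omega> (\<lambda>k. g k i j) = 0"
proof (rule damped_Dt_sat_eq_0[OF sbp_t, where c = "\<lambda>i j. vavg nv \<omega> (\<lambda>k. g k i j)"
      and c0 = "\<lambda>i j. vavg nv \<omega> (\<lambda>k. g0 k i j)"])
  show "\<sigma> > 0"
    using eps sigs siga by (simp add: add_pos_nonneg)
  show "\<forall>i\<le>nt. Dt_sat nt Ht Qt (\<lambda>i j. vavg nv \<omega> (\<lambda>k. g k i j)) (\<lambda>i j. vavg nv \<omega> (\<lambda>k. g0 k i j)) i j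
      + \<sigma> * vavg nv \<omega> (\<lambda>k. g k i j) = 0"
    using average_g_equation assms(2) by blast
  show "vavg nv \<omega> (\<lambda>k. g0 k 0 j) = 0"
    using g0_avg assms(2) by blast
qed (rule assms(1))

lemma rho_energy_rate:
  assumes "i \<le> nt"
  shows "energy_rate \<rho> \<rho>0 i
    = - \<sigma>a * h_inner nx Hx (\<rho> i) (\<rho> i)
      + vavg nv \<omega> (\<lambda>k. \<tau>\<rho> * (\<rho> i nx * (vneg (v k) * w k i nx) - \<rho> i 0 * (vpos (v k) * w k i 0))
                      - v k * h_inner nx Hx (\<rho> i) (Dx_app nx Hx Qx (g k) i))"
proof -
  let ?F = "\<lambda>i' j'. vavg nv \<omega> (\<lambda>k. vpos (v k) * w k i' j')"
  let ?G = "\<lambda>i' j'. vavg nv \<omega> (\<lambda>k. vneg (v k) * w k i' j')"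
  have "energy_rate \<rho> \<rho>0 i
      = h_inner nx Hx (\<rho> i) (\<lambda>j. - \<sigma>a * \<rho> i j - \<tau>\<rho> * liftL Hx ?F i j + \<tau>\<rho> * liftR nx Hx ?G i j
          - Dx_app nx Hx Qx (\<lambda>i' j'. vavg nv \<omega> (\<lambda>k. v k * g k i' j')) i j)"
    using eq_rho assms unfolding Dt_sat_def by (intro h_inner_cong) (simp add: algebra_simps)
  also have "\<dots> = - \<sigma>a * h_inner nx Hx (\<rho> i) (\<rho> i) - \<tau>\<rho> * \<rho> i 0 * ?F i 0 + \<tau>\<rho> * \<rho> i nx * ?G i nx
      - vavg nv \<omega> (\<lambda>k. v k * h_inner nx Hx (\<rho> i) (Dx_app nx Hx Qx (g k) i))"
    using Hx_nonzero by (simp add: h_inner_liftL h_inner_liftR Dx_app_vavg Dx_app_scale h_inner_vavg)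
  also have "\<dots> = - \<sigma>a * h_inner nx Hx (\<rho> i) (\<rho> i)
      + vavg nv \<omega> (\<lambda>k. \<tau>\<rho> * (\<rho> i nx * (vneg (v k) * w k i nx) - \<rho> i 0 * (vpos (v k) * w k i 0))
                      - v k * h_inner nx Hx (\<rho> i) (Dx_app nx Hx Qx (g k) i))"
    by (simp only: vavg_diff vavg_scale) (simp add: algebra_simps)
  finally show ?thesis .
qed

lemma g_energy_rate:
  assumes "i \<le> nt" "k \<in> {1..nv}"
  shows "energy_rate (g k) (g0 k) i
    = - \<sigma> * h_inner nx Hx (g k i) (g k i)
      + \<tau>g * (vneg (v k) * g k i nx * w k i nx - vpos (v k) * g k i 0 * w k i 0)
      + h_inner nx Hx (g k i) (common_rhs i)
      - v k / \<epsilon> * (((g k i nx)^2 - (g k i 0)^2) / 2)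
      - v k / \<epsilon>^2 * h_inner nx Hx (g k i) (Dx_app nx Hx Qx \<rho> i)"
proof -
  have "energy_rate (g k) (g0 k) i
      = h_inner nx Hx (g k i) (\<lambda>j. - \<sigma> * g k i j + satg nx Hx \<tau>g \<epsilon> (v k) \<rho> (g k) i j + common_rhs i j
          - v k / \<epsilon> * Dx_app nx Hx Qx (g k) i j - v k / \<epsilon>^2 * Dx_app nx Hx Qx \<rho> i j)"
  proof (rule h_inner_cong)
    fix j assume "j \<le> nx"
    show "Dt_sat nt Ht Qt (g k) (g0 k) i j = - \<sigma> * g k i j + satg nx Hx \<tau>g \<epsilon> (v k) \<rho> (g k) i j
        + common_rhs i j - v k / \<epsilon> * Dx_app nx Hx Qx (g k) i j - v k / \<epsilon>^2 * Dx_app nx Hx Qx \<rho> i j"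
      using eq_g[rule_format, OF assms(2,1) \<open>j \<le> nx\<close>] unfolding Dt_sat_def by argo
  qed
  also have "\<dots> = - \<sigma> * h_inner nx Hx (g k i) (g k i)
      + h_inner nx Hx (g k i) (satg nx Hx \<tau>g \<epsilon> (v k) \<rho> (g k) i)
      + h_inner nx Hx (g k i) (common_rhs i)
      - v k / \<epsilon> * h_inner nx Hx (g k i) (Dx_app nx Hx Qx (g k) i)
      - v k / \<epsilon>^2 * h_inner nx Hx (g k i) (Dx_app nx Hx Qx \<rho> i)"
    by (simp only: h_inner_add h_inner_diff h_inner_scale)
  also have "h_inner nx Hx (g k i) (Dx_app nx Hx Qx (g k) i) = ((g k i nx)^2 - (g k i 0)^2) / 2"
    unfolding Dx_app_eq_sbp_apply
    by (rule summation_by_parts_square[of nx Qx Hx, OF Qx_boundary Hx_nonzero(1)])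
  also have "h_inner nx Hx (g k i) (satg nx Hx \<tau>g \<epsilon> (v k) \<rho> (g k) i)
      = \<tau>g * (vneg (v k) * g k i nx * w k i nx - vpos (v k) * g k i 0 * w k i 0)"
    by (rule h_inner_satg[of Hx nx, OF Hx_nonzero(2,3)])
  finally show ?thesis .
qed

lemma velocity_energy_rate:
  assumes "i \<le> nt" "k \<in> {1..nv}"
  shows "\<tau>\<rho> * (\<rho> i nx * (vneg (v k) * w k i nx) - \<rho> i 0 * (vpos (v k) * w k i 0))
      - v k * h_inner nx Hx (\<rho> i) (Dx_app nx Hx Qx (g k) i) + \<epsilon>^2 * energy_rate (g k) (g0 k) i
    = - (\<epsilon>^2 * \<sigma>) * h_inner nx Hx (g k i) (g k i) + \<epsilon>^2 * h_inner nx Hx (g k i) (common_rhs i)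
      + (vneg (v k) * (w k i 0)^2 - vpos (v k) * (w k i nx)^2) / (2 * \<epsilon>)
      + v k * ((\<rho> i nx)^2 - (\<rho> i 0)^2) / (2 * \<epsilon>)"
proof -
  have sat: "\<tau>\<rho> * (\<rho> i nx * (vneg (v k) * w k i nx) - \<rho> i 0 * (vpos (v k) * w k i 0))
      + \<epsilon>^2 * (\<tau>g * (vneg (v k) * g k i nx * w k i nx - vpos (v k) * g k i 0 * w k i 0))
    = (vneg (v k) * (w k i nx)^2 - vpos (v k) * (w k i 0)^2) / (2 * \<epsilon>)"
    using eps by (simp add: tau_rho tau_g field_simps power2_eq_square)
  have sbp: "h_inner nx Hx (\<rho> i) (Dx_app nx Hx Qx (g k) i) + h_inner nx Hx (g k i) (Dx_app nx Hx Qx \<rho> i)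
      = \<rho> i nx * g k i nx - \<rho> i 0 * g k i 0"
    using summation_by_parts[of nx Qx Hx, OF Qx_boundary Hx_nonzero(1)] by (simp add: Dx_app_eq_sbp_apply)
  \<comment> \<open>proved for opaque atoms, so that \<open>field_simps\<close> does not expand the inner products\<close>
  have regroup: "A - v k * h1 + \<epsilon>^2 * (- s * hg + B + hz - v k / \<epsilon> * (q / 2) - v k / \<epsilon>^2 * h2)
      = - (\<epsilon>^2 * s) * hg + \<epsilon>^2 * hz + W - v k * (h1 + h2) - \<epsilon> * v k * q / 2"
    if "A + \<epsilon>^2 * B = W" for A B h1 h2 hz hg q s W
    using eps by (simp add: that[symmetric] field_simps power2_eq_square)
  have "\<tau>\<rho> * (\<rho> i nx * (vneg (v k) * w k i nx) - \<rho> i 0 * (vpos (v k) * w k i 0))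
      - v k * h_inner nx Hx (\<rho> i) (Dx_app nx Hx Qx (g k) i) + \<epsilon>^2 * energy_rate (g k) (g0 k) i
    = - (\<epsilon>^2 * \<sigma>) * h_inner nx Hx (g k i) (g k i) + \<epsilon>^2 * h_inner nx Hx (g k i) (common_rhs i)
      + (vneg (v k) * (w k i nx)^2 - vpos (v k) * (w k i 0)^2) / (2 * \<epsilon>)
      - v k * (h_inner nx Hx (\<rho> i) (Dx_app nx Hx Qx (g k) i) + h_inner nx Hx (g k i) (Dx_app nx Hx Qx \<rho> i))
      - \<epsilon> * v k * ((g k i nx)^2 - (g k i 0)^2) / 2"
    unfolding g_energy_rate[OF assms] by (rule regroup[OF sat])
  also have "\<dots> = - (\<epsilon>^2 * \<sigma>) * h_inner nx Hx (g k i) (g k i) + \<epsilon>^2 * h_inner nx Hx (g k i) (common_rhs i)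
      + (vneg (v k) * (w k i 0)^2 - vpos (v k) * (w k i nx)^2) / (2 * \<epsilon>)
      + v k * ((\<rho> i nx)^2 - (\<rho> i 0)^2) / (2 * \<epsilon>)"
    unfolding sbp using upwind_boundary_flux[of \<epsilon> "v k" "\<rho> i nx" "g k i nx" "\<rho> i 0" "g k i 0"] eps
    by linarith
  finally show ?thesis .
qed

lemma level_energy_rate_nonpos:
  assumes "i \<le> nt"
  shows "energy_rate \<rho> \<rho>0 i + \<epsilon>^2 * vavg nv \<omega> (\<lambda>k. energy_rate (g k) (g0 k) i) \<le> 0"
proof -
  define flux where "flux k = (vneg (v k) * (w k i 0)^2 - vpos (v k) * (w k i nx)^2) / (2 * \<epsilon>)" for k
  have "energy_rate \<rho> \<rho>0 i + \<epsilon>^2 * vavg nv \<omega> (\<lambda>k. energy_rate (g k) (g0 k) i)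
    = - \<sigma>a * h_inner nx Hx (\<rho> i) (\<rho> i)
      + vavg nv \<omega> (\<lambda>k. \<tau>\<rho> * (\<rho> i nx * (vneg (v k) * w k i nx) - \<rho> i 0 * (vpos (v k) * w k i 0))
                      - v k * h_inner nx Hx (\<rho> i) (Dx_app nx Hx Qx (g k) i)
                      + \<epsilon>^2 * energy_rate (g k) (g0 k) i)"
    by (simp add: rho_energy_rate[OF assms])
  also have "\<dots> = - \<sigma>a * h_inner nx Hx (\<rho> i) (\<rho> i)
      + vavg nv \<omega> (\<lambda>k. - (\<epsilon>^2 * \<sigma>) * h_inner nx Hx (g k i) (g k i)
                      + \<epsilon>^2 * h_inner nx Hx (g k i) (common_rhs i)
                      + flux k + v k * ((\<rho> i nx)^2 - (\<rho> i 0)^2) / (2 * \<epsilon>))"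
    using velocity_energy_rate[OF assms] unfolding flux_def
    by (intro arg_cong[where f = "\<lambda>x. _ + x"] vavg_cong) simp
  also have "\<dots> = - \<sigma>a * h_inner nx Hx (\<rho> i) (\<rho> i)
      - (\<epsilon>^2 * \<sigma>) * vavg nv \<omega> (\<lambda>k. h_inner nx Hx (g k i) (g k i)) + vavg nv \<omega> flux"
    using vavg_h_inner_eq_0[of nx nv \<omega> "\<lambda>k. g k i" Hx "common_rhs i"] average_g_eq_0[OF assms]
    by (simp add: vavg_velocity[OF quad] flip: times_divide_eq_right)
  also have "\<dots> \<le> 0"
  proof -
    have "0 \<le> h_inner nx Hx (\<rho> i) (\<rho> i)"
      by (rule h_inner_self_nonneg[of nx Hx, OF Hx_nonneg])
    moreover have "vavg nv \<omega> (\<lambda>k. 0) \<le> vavg nv \<omega> (\<lambda>k. h_inner nx Hx (g k i) (g k i))"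
      by (rule vavg_mono[OF quad]) (rule h_inner_self_nonneg[of nx Hx, OF Hx_nonneg])
    moreover have "vavg nv \<omega> flux \<le> vavg nv \<omega> (\<lambda>k. 0)"
    proof (rule vavg_mono[OF quad])
      fix k
      have "vneg (v k) * (w k i 0)^2 \<le> 0" "0 \<le> vpos (v k) * (w k i nx)^2"
        by (simp_all add: vneg_def vpos_def mult_nonpos_nonneg)
      then show "flux k \<le> 0"
        using eps by (simp add: flux_def divide_nonpos_pos)
    qed
    moreover have "0 \<le> \<epsilon>^2 * \<sigma>"
      using sigs siga by simp
    ultimately have "0 \<le> \<sigma>a * h_inner nx Hx (\<rho> i) (\<rho> i)"
        "0 \<le> (\<epsilon>^2 * \<sigma>) * vavg nv \<omega> (\<lambda>k. h_inner nx Hx (g k i) (g k i))" "vavg nv \<omega> flux \<le> 0"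
      using siga by simp_all
    then show ?thesis
      by linarith
  qed
  finally show ?thesis .
qed

lemma energy_estimate:
  "1/2 * slab_energy nx Hx nt \<rho> + \<epsilon>^2 / 2 * vavg nv \<omega> (\<lambda>k. slab_energy nx Hx nt (g k))
   \<le> 1/2 * slab_energy nx Hx 0 \<rho>0 + \<epsilon>^2 / 2 * vavg nv \<omega> (\<lambda>k. slab_energy nx Hx 0 (g0 k))"
proof -
  let ?E = "\<lambda>u u0. \<Sum>i\<le>nt. Ht i i * energy_rate u u0 i"
  let ?h = "\<lambda>u m. h_inner nx Hx (u m) (u m)"
  have Ht_pos: "\<forall>i\<le>nt. Ht i i > 0"
    using is_sbpD[OF sbp_t] by blast
  have "?E \<rho> \<rho>0 + \<epsilon>^2 * vavg nv \<omega> (\<lambda>k. ?E (g k) (g0 k))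
      = (\<Sum>i\<le>nt. Ht i i * (energy_rate \<rho> \<rho>0 i + \<epsilon>^2 * vavg nv \<omega> (\<lambda>k. energy_rate (g k) (g0 k) i)))"
    unfolding vavg_def distrib_left sum.distrib sum_distrib_left
    by (subst (2) sum.swap) (simp add: mult_ac)
  also have "\<dots> \<le> 0"
    using Ht_pos level_energy_rate_nonpos
    by (intro sum_nonpos mult_nonneg_nonpos) (auto intro: less_imp_le)
  finally have total: "?E \<rho> \<rho>0 + \<epsilon>^2 * vavg nv \<omega> (\<lambda>k. ?E (g k) (g0 k)) \<le> 0" .
  have "(?h \<rho> nt - ?h \<rho>0 0) / 2 \<le> ?E \<rho> \<rho>0"
    by (rule Dt_sat_energy_ge[OF sbp_t, of nx Hx, OF Hx_nonneg])
  moreover have "vavg nv \<omega> (\<lambda>k. (?h (g k) nt - ?h (g0 k) 0) / 2) \<le> vavg nv \<omega> (\<lambda>k. ?E (g k) (g0 k))"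
    by (rule vavg_mono[OF quad] Dt_sat_energy_ge[OF sbp_t, of nx Hx, OF Hx_nonneg])+
  then have "\<epsilon>^2 * vavg nv \<omega> (\<lambda>k. (?h (g k) nt - ?h (g0 k) 0) / 2)
      \<le> \<epsilon>^2 * vavg nv \<omega> (\<lambda>k. ?E (g k) (g0 k))"
    by (rule mult_left_mono) simp
  ultimately show ?thesis
    using total is_sbpD(2)[OF sbp_x] by (simp add: slab_energy_eq_h_inner algebra_simps)
qed

end

theorem theorem3p6:
  fixes nx nt nv px pt :: nat
    and xs ts :: "nat \<Rightarrow> real"
    and Hx Qx Ht Qt :: "nat \<Rightarrow> nat \<Rightarrow> real"
    and \<omega> v :: "nat \<Rightarrow> real"
    and \<epsilon> \<sigma>s \<sigma>a \<tau>\<rho> \<tau>g :: real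
    and \<rho> \<rho>0 :: "nat \<Rightarrow> nat \<Rightarrow> real"
    and g g0 :: "nat \<Rightarrow> nat \<Rightarrow> nat \<Rightarrow> real"
  assumes sbp_x: "is_sbp nx xs Hx Qx px"
    and sbp_t: "is_sbp nt ts Ht Qt pt"
    and quad: "vel_quad nv \<omega> v"
    and symq: "sym_quad nv \<omega> v"
    and eps: "\<epsilon> > 0" and sigs: "\<sigma>s > 0" and siga: "\<sigma>a \<ge> 0"
    and tau_rho: "\<tau>\<rho> = 1 / (2 * \<epsilon>)"
    and tau_g: "\<tau>g = 1 / (2 * \<epsilon>^2)"
    and g0_avg: "\<forall>i\<le>nt. \<forall>j\<le>nx. vavg nv \<omega> (\<lambda>k. g0 k i j) = 0"
    and eq_rho: "\<forall>i\<le>nt. \<forall>j\<le>nx.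
        Dt_app nt Ht Qt \<rho> i j
        + Dx_app nx Hx Qx (\<lambda>i' j'. vavg nv \<omega> (\<lambda>k. v k * g k i' j')) i j
        = - \<sigma>a * \<rho> i j
          - \<tau>\<rho> * liftL Hx (\<lambda>i' j'. vavg nv \<omega> (\<lambda>k. vpos (v k) * (\<rho> i' j' + \<epsilon> * g k i' j'))) i j
          + \<tau>\<rho> * liftR nx Hx (\<lambda>i' j'. vavg nv \<omega> (\<lambda>k. vneg (v k) * (\<rho> i' j' + \<epsilon> * g k i' j'))) i j
          - liftB Ht (\<lambda>i' j'. \<rho> i' j' - \<rho>0 i' j') i j"
    and eq_g: "\<forall>k\<in>{1..nv}. \<forall>i\<le>nt. \<forall>j\<le>nx.
        Dt_app nt Ht Qt (g k) i j
        + v k / \<epsilon> * Dx_app nx Hx Qx (g k) i j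
        - 1 / \<epsilon> * vavg nv \<omega> (\<lambda>k'. v k' * Dx_app nx Hx Qx (g k') i j)
        + v k / \<epsilon>^2 * Dx_app nx Hx Qx \<rho> i j
        = - (\<sigma>s / \<epsilon>^2 + \<sigma>a) * g k i j
          + satg nx Hx \<tau>g \<epsilon> (v k) \<rho> (g k) i j
          - vavg nv \<omega> (\<lambda>k'. satg nx Hx \<tau>g \<epsilon> (v k') \<rho> (g k') i j)
          - liftB Ht (\<lambda>i' j'. g k i' j' - g0 k i' j') i j"
  shows "1/2 * slab_energy nx Hx nt \<rho>
           + \<epsilon>^2 / 2 * vavg nv \<omega> (\<lambda>k. slab_energy nx Hx nt (g k))
         \<le> 1/2 * slab_energy nx Hx 0 \<rho>0
           + \<epsilon>^2 / 2 * vavg nv \<omega> (\<lambda>k. slab_energy nx Hx 0 (g0 k))"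
proof -
  interpret micro_macro_scheme nx nt nv px pt xs ts Hx Qx Ht Qt \<omega> v \<epsilon> \<sigma>s \<sigma>a \<tau>\<rho> \<tau>g \<rho> \<rho>0 g g0
    using sbp_x sbp_t quad eps sigs siga tau_rho tau_g g0_avg eq_rho eq_g by unfold_locales
  show ?thesis
    by (rule energy_estimate)
qed

end
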